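(* Let $G=(V,E)$ be a finite, simple, connected graph with $|V|\geq 3$ and let $d\in\mathrm{Der}(\mathcal{A}(G))$ with $d(e_i)=\sum_{k\in V}d_{ik}e_k$. Then: (i) for every $i\in V$, $d_{ii}=\frac{1}{2\deg(i)}\sum_{k\in\mathcal{N}(i)}d_{kk}$; (ii) if $i\sim_t j$ then $d_{ii}=d_{jj}$.
   Context: Throughout, $\mathbb{K}$ is a field of characteristic $0$. A graph $G=(V,E)$ has vertex set $V=\{1,\dots,n\}$ and is assumed finite, simple (no loops, no multiple edges) and connected. $\mathcal{N}(i)$ denotes the set of neighbors of vertex $i$, $\deg(i)=|\mathcal{N}(i)|$, and $(a_{ij})$ is the adjacency matrix ($a_{ij}=1$ if $i,j$ are adjacent, $0$ otherwise). The evolution algebra $\mathcal{A}(G)$ is the $\mathbb{K}$-algebra with basis $\{e_i: i\in V\}$ and product $e_i\cdot e_i=\sum_{k\in V}a_{ik}e_k=\sum_{k\in\mathcal{N}(i)}e_k$ and $e_i\cdot e_j=0$ for $i\neq j$. A derivation of $\mathcal{A}(G)$ is a linear map $d:\mathcal{A}(G)\to\mathcal{A}(G)$ with $d(u\cdot v)=d(u)\cdot v+u\cdot d(v)$ for all $u,v$; $\mathrm{Der}(\mathcal{A}(G))$ is the space of derivations, and for $d$ in it we write $d(e_i)=\sum_{k\in V}d_{ik}e_k$. Two vertices $i,j$ are twins, written $i\sim_t j$, if $\mathcal{N}(i)=\mathcal{N}(j)$. *)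

theory Defs
  imports Main
begin

text \<open>A finite simple graph on the vertex set UNIV of a finite type 'v,
  given by its adjacency relation E.\<close>

definition simple_graph :: "('v \<Rightarrow> 'v \<Rightarrow> bool) \<Rightarrow> bool" where
  "simple_graph E \<longleftrightarrow> (\<forall>i j. E i j \<longrightarrow> E j i) \<and> (\<forall>i. \<not> E i i)"

definition connected_graph :: "('v \<Rightarrow> 'v \<Rightarrow> bool) \<Rightarrow> bool" where
  "connected_graph E \<longleftrightarrow> (\<forall>i j. E\<^sup>*\<^sup>* i j)"

definition nbhd :: "('v \<Rightarrow> 'v \<Rightarrow> bool) \<Rightarrow> 'v \<Rightarrow> 'v set" where
  "nbhd E i = {k. E i k}"

definition deg :: "('v \<Rightarrow> 'v \<Rightarrow> bool) \<Rightarrow> 'v \<Rightarrow> nat" where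
  "deg E i = card (nbhd E i)"

definition twins :: "('v \<Rightarrow> 'v \<Rightarrow> bool) \<Rightarrow> 'v \<Rightarrow> 'v \<Rightarrow> bool" where
  "twins E i j \<longleftrightarrow> nbhd E i = nbhd E j"

text \<open>Elements of the evolution algebra A(G) are coordinate vectors
  u :: 'v \<Rightarrow> 'a, u = sum of u i * e_i.\<close>

definition adj :: "('v \<Rightarrow> 'v \<Rightarrow> bool) \<Rightarrow> 'v \<Rightarrow> 'v \<Rightarrow> 'a::field" where
  "adj E i k = (if E i k then 1 else 0)"

definition basis_vec :: "'v \<Rightarrow> ('v \<Rightarrow> 'a::field)" where
  "basis_vec i = (\<lambda>k. if k = i then 1 else 0)"

text \<open>Product: bilinear extension of e_i e_i = sum_k a_ik e_k, e_i e_j = 0 (i \<noteq> j).\<close>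
definition evo_mult :: "('v::finite \<Rightarrow> 'v \<Rightarrow> bool) \<Rightarrow> ('v \<Rightarrow> 'a::field) \<Rightarrow> ('v \<Rightarrow> 'a) \<Rightarrow> ('v \<Rightarrow> 'a)" where
  "evo_mult E u v = (\<lambda>k. \<Sum>i\<in>UNIV. u i * v i * adj E i k)"

definition linear_map :: "(('v \<Rightarrow> 'a::field) \<Rightarrow> ('v \<Rightarrow> 'a)) \<Rightarrow> bool" where
  "linear_map d \<longleftrightarrow> (\<forall>u v. d (\<lambda>k. u k + v k) = (\<lambda>k. d u k + d v k)) \<and> (\<forall>c u. d (\<lambda>k. c * u k) = (\<lambda>k. c * d u k))"

definition is_derivation :: "('v::finite \<Rightarrow> 'v \<Rightarrow> bool) \<Rightarrow> (('v \<Rightarrow> 'a::field) \<Rightarrow> ('v \<Rightarrow> 'a)) \<Rightarrow> bool" where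
  "is_derivation E d \<longleftrightarrow> linear_map d \<and>
     (\<forall>u v. d (evo_mult E u v) = (\<lambda>k. evo_mult E (d u) v k + evo_mult E u (d v) k))"

definition dcoef :: "(('v \<Rightarrow> 'a::field) \<Rightarrow> ('v \<Rightarrow> 'a)) \<Rightarrow> 'v \<Rightarrow> 'v \<Rightarrow> 'a" where
  "dcoef d i k = d (basis_vec i) k"

end

theory Submission
  imports Defs
begin

text \<open>Apply d to the defining relations of the basis. From e_i e_i = \<Sum>k\<in>N(i). e_k we get
  \<Sum>x\<in>N(i). d_xm = 2 d_ii whenever m \<in> N(i) (and 0 otherwise), and from e_i e_j = 0 for
  i \<noteq> j we get d_ij e_j e_j + d_ji e_i e_i = 0; when no vertex is isolated the latter forces
  d_km + d_mk = 0 for all k \<noteq> m. Summing the first relation over m \<in> N(i), the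
  off-diagonal terms cancel in pairs and leave 2 deg(i) d_ii = \<Sum>k\<in>N(i). d_kk. For twins
  i, j the first relation at a common neighbour m gives 2 d_ii = 2 d_jj.\<close>

lemma linear_map_add:
  assumes "linear_map d"
  shows "d (\<lambda>k. u k + v k) = (\<lambda>k. d u k + d v k)"
  using assms unfolding linear_map_def by blast

lemma linear_map_scale:
  assumes "linear_map d"
  shows "d (\<lambda>k. c * u k) = (\<lambda>k. c * d u k)"
  using assms unfolding linear_map_def by blast

lemma linear_map_zero:
  assumes "linear_map d"
  shows "d (\<lambda>k. 0) = (\<lambda>k. 0)"
  using linear_map_scale[OF assms, of 0 "\<lambda>k. 0"] by simp

lemma linear_map_sum:
  assumes "linear_map d" and "finite A"
  shows "d (\<lambda>k. \<Sum>x\<in>A. f x k) = (\<lambda>m. \<Sum>x\<in>A. d (f x) m)"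
  using assms(2)
proof (induction A rule: finite_induct)
  case empty
  show ?case using linear_map_zero[OF assms(1)] by simp
next
  case (insert a A)
  have "d (\<lambda>k. \<Sum>x\<in>insert a A. f x k) = d (\<lambda>k. f a k + (\<Sum>x\<in>A. f x k))"
    using insert by simp
  also have "\<dots> = (\<lambda>m. d (f a) m + d (\<lambda>k. \<Sum>x\<in>A. f x k) m)"
    using linear_map_add[OF assms(1), of "f a"] by simp
  finally show ?case using insert by simp
qed

lemma linear_map_eq_sum_dcoef:
  fixes d :: "('v::finite \<Rightarrow> 'a::field) \<Rightarrow> ('v \<Rightarrow> 'a)"
  assumes "linear_map d"
  shows "d u m = (\<Sum>x\<in>UNIV. u x * dcoef d x m)"
proof -
  have "u = (\<lambda>k. \<Sum>x\<in>UNIV. u x * basis_vec x k)"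
    by (rule ext) (simp add: basis_vec_def if_distrib cong: if_cong)
  then have "d u = (\<lambda>m. \<Sum>x\<in>UNIV. d (\<lambda>k. u x * basis_vec x k) m)"
    using linear_map_sum[OF assms, of UNIV "\<lambda>x k. u x * basis_vec x k"] by simp
  then show ?thesis by (simp add: linear_map_scale[OF assms] dcoef_def)
qed

lemma sum_adj_eq_sum_nbhd:
  fixes f :: "'v::finite \<Rightarrow> 'a::field"
  shows "(\<Sum>x\<in>UNIV. adj E i x * f x) = (\<Sum>x\<in>nbhd E i. f x)"
  unfolding adj_def nbhd_def by (simp add: if_distrib[of "\<lambda>c. c * _"] sum.If_cases cong: if_cong)

lemma evo_mult_basis_left:
  "evo_mult E (basis_vec i) v m = (v i * adj E i m :: 'a::field)"
  unfolding evo_mult_def basis_vec_def by (simp add: if_distrib[of "\<lambda>c. c * _"] cong: if_cong)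

lemma evo_mult_basis_right:
  "evo_mult E u (basis_vec j) m = (u j * adj E j m :: 'a::field)"
  unfolding evo_mult_def basis_vec_def
  by (simp add: if_distrib[of "\<lambda>c. _ * c"] if_distrib[of "\<lambda>c. c * _"] cong: if_cong)

lemma evo_mult_basis_basis:
  "evo_mult E (basis_vec i) (basis_vec j) = (\<lambda>m. if i = j then adj E i m else 0 :: 'a::field)"
  by (rule ext, subst evo_mult_basis_right) (simp add: basis_vec_def)

lemma derivation_basis_product:
  assumes "is_derivation E d"
  shows "d (evo_mult E (basis_vec i) (basis_vec j)) m
           = dcoef d i j * adj E j m + dcoef d j i * adj E i m"
  using assms unfolding is_derivation_def
  by (simp add: evo_mult_basis_left evo_mult_basis_right dcoef_def)

lemma derivation_basis_square:
  fixes d :: "('v::finite \<Rightarrow> 'a::field) \<Rightarrow> ('v \<Rightarrow> 'a)"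
  assumes "is_derivation E d"
  shows "(\<Sum>x\<in>nbhd E i. dcoef d x m) = (if E i m then 2 * dcoef d i i else 0)"
proof -
  have "linear_map d" using assms unfolding is_derivation_def by blast
  then have "d (evo_mult E (basis_vec i) (basis_vec i)) m = (\<Sum>x\<in>nbhd E i. dcoef d x m)"
    by (simp add: evo_mult_basis_basis linear_map_eq_sum_dcoef sum_adj_eq_sum_nbhd)
  then show ?thesis
    using derivation_basis_product[OF assms, where i = i and j = i and m = m]
    by (cases "E i m") (simp_all add: adj_def)
qed

lemma derivation_basis_orthogonal:
  fixes d :: "('v::finite \<Rightarrow> 'a::field) \<Rightarrow> ('v \<Rightarrow> 'a)"
  assumes "is_derivation E d" and "i \<noteq> j"
  shows "dcoef d i j * adj E j m + dcoef d j i * adj E i m = 0"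
proof -
  have "linear_map d" using assms unfolding is_derivation_def by blast
  then show ?thesis
    using derivation_basis_product[OF assms(1), where i = i and j = j and m = m] assms(2)
    by (simp add: evo_mult_basis_basis linear_map_zero)
qed

lemma derivation_dcoef_antisym:
  fixes d :: "('v::finite \<Rightarrow> 'a::field) \<Rightarrow> ('v \<Rightarrow> 'a)"
  assumes "is_derivation E d" and no_isolated: "\<And>i. \<exists>k. E i k" and "k \<noteq> m"
  shows "dcoef d k m + dcoef d m k = 0"
proof -
  obtain x where "E k x" using no_isolated by blast
  then have x: "dcoef d k m * adj E m x + dcoef d m k = 0"
    using derivation_basis_orthogonal[OF assms(1,3), where m = x] by (simp add: adj_def)
  show ?thesis
  proof (cases "E m x")
    case True
    then show ?thesis using x by (simp add: adj_def)
  next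
    case False
    then have "dcoef d m k = 0" using x by (simp add: adj_def)
    moreover obtain y where "E m y" using no_isolated by blast
    ultimately have "dcoef d k m = 0"
      using derivation_basis_orthogonal[OF assms(1,3), where m = y] by (simp add: adj_def)
    with \<open>dcoef d m k = 0\<close> show ?thesis by simp
  qed
qed

lemma derivation_diag_eq_nbhd_mean:
  fixes d :: "('v::finite \<Rightarrow> 'a::field_char_0) \<Rightarrow> ('v \<Rightarrow> 'a)"
  assumes der: "is_derivation E d" and no_isolated: "\<And>i. \<exists>k. E i k"
  shows "dcoef d i i = (1 / (2 * of_nat (deg E i))) * (\<Sum>k\<in>nbhd E i. dcoef d k k)"
proof -
  define N where "N = nbhd E i"
  define D where "D = dcoef d"
  have "(\<Sum>k\<in>N. D k m) = 2 * D i i" if "m \<in> N" for m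
    using derivation_basis_square[OF der, where i = i and m = m] that
    by (simp add: N_def D_def nbhd_def)
  then have "(\<Sum>m\<in>N. \<Sum>k\<in>N. D k m) = of_nat (card N) * (2 * D i i)"
    by simp
  moreover have "(\<Sum>m\<in>N. D k m + D m k) = (if k \<in> N then 2 * D k k else 0)" for k
  proof -
    have "(\<Sum>m\<in>N. D k m + D m k) = (\<Sum>m\<in>N. if m = k then 2 * D k k else 0)"
      by (rule sum.cong) (auto simp: D_def derivation_dcoef_antisym[OF der no_isolated])
    then show ?thesis by simp
  qed
  then have "(\<Sum>k\<in>N. \<Sum>m\<in>N. D k m + D m k) = 2 * (\<Sum>k\<in>N. D k k)"
    by (simp add: sum_distrib_left)
  then have "2 * (\<Sum>m\<in>N. \<Sum>k\<in>N. D k m) = 2 * (\<Sum>k\<in>N. D k k)"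
    by (simp add: sum.distrib sum.swap[of "\<lambda>k m. D m k"] flip: mult_2)
  ultimately have eq: "of_nat (card N) * (2 * D i i) = (\<Sum>k\<in>N. D k k)" by (simp add: mult_ac)
  have "card N \<noteq> 0" using no_isolated[of i] by (auto simp: N_def nbhd_def)
  with eq show ?thesis by (simp add: deg_def D_def flip: N_def) (simp add: field_simps)
qed

lemma derivation_diag_eq_if_twins:
  fixes d :: "('v::finite \<Rightarrow> 'a::field_char_0) \<Rightarrow> ('v \<Rightarrow> 'a)"
  assumes der: "is_derivation E d" and "E i m" and "twins E i j"
  shows "dcoef d i i = dcoef d j j"
proof -
  have "E j m" using assms(2,3) by (auto simp: twins_def nbhd_def)
  have "2 * dcoef d i i = (\<Sum>x\<in>nbhd E i. dcoef d x m)"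
    using derivation_basis_square[OF der, where i = i and m = m] \<open>E i m\<close> by simp
  also have "\<dots> = (\<Sum>x\<in>nbhd E j. dcoef d x m)"
    using \<open>twins E i j\<close> by (simp add: twins_def)
  also have "\<dots> = 2 * dcoef d j j"
    using derivation_basis_square[OF der, where i = j and m = m] \<open>E j m\<close> by simp
  finally show ?thesis by simp
qed

lemma connected_graph_no_isolated:
  assumes "connected_graph E" and "card (UNIV :: 'v::finite set) \<ge> 2"
  shows "\<exists>k. E (i :: 'v) k"
proof -
  have "\<not> UNIV \<subseteq> {i}"
    using assms(2) card_mono[of "{i}" UNIV] by auto
  then obtain j where "j \<noteq> i" by blast
  have "E\<^sup>*\<^sup>* i j" using assms(1) unfolding connected_graph_def by blast
  then show ?thesis using \<open>j \<noteq> i\<close> by (cases rule: converse_rtranclpE) auto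
qed

theorem corollary3p2:
  fixes E :: "'v::finite \<Rightarrow> 'v \<Rightarrow> bool"
    and d :: "('v \<Rightarrow> 'a::field_char_0) \<Rightarrow> ('v \<Rightarrow> 'a)"
  assumes "simple_graph E"
    and "connected_graph E"
    and "card (UNIV :: 'v set) \<ge> 3"
    and "is_derivation E d"
  shows "(\<forall>i. dcoef d i i = (1 / (2 * of_nat (deg E i))) * (\<Sum>k\<in>nbhd E i. dcoef d k k))
       \<and> (\<forall>i j. twins E i j \<longrightarrow> dcoef d i i = dcoef d j j)"
proof -
  have no_isolated: "\<exists>k. E i k" for i
    using connected_graph_no_isolated[OF assms(2)] assms(3) by simp
  show ?thesis
    using derivation_diag_eq_nbhd_mean[OF assms(4) no_isolated]
      derivation_diag_eq_if_twins[OF assms(4)] no_isolated by blast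
qed

end
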